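(* Let $q$ be a prime power and let $n$ be a positive integer coprime to $q$, written $n=2^mn'$ with $n'$ odd and $m\ge 0$. Let $r$ be the positive integer such that $2^r\,\|\,(q+1)$. Then $$|\Omega_{q^2,n}|=\begin{cases}2^m|\Omega_{q^2,n'}| & \text{if } 0\le m\le r,\\ 2^r|\Omega_{q^2,n'}| & \text{if } m>r.\end{cases}$$ In particular, $|\Omega_{q^2,1}|=1$ and $|\Omega_{q^2,2^m}|=2^m$ if $0\le m\le r$ and $|\Omega_{q^2,2^m}|=2^r$ if $m>r$.
   Context: $\mathbb{F}_{q^2}$ is the finite field with $q^2$ elements. For $\alpha\in\mathbb{F}_{q^2}$ put $\bar\alpha=\alpha^q$, and for $f(x)=\sum_i f_ix^i$ put $\overline{f(x)}=\sum_i \bar f_i x^i$. For $f(x)$ with $f(0)\neq 0$, $f^*(x)=x^{\deg f}f(0)^{-1}f(1/x)$ and $f^\dagger(x)=\overline{f^*(x)}$. A polynomial is SCRIM if it is monic, irreducible over $\mathbb{F}_{q^2}$, has nonzero constant term, and satisfies $f=f^\dagger$. $\Omega_{q^2,n}$ denotes the set of SCRIM polynomials in $\mathbb{F}_{q^2}[x]$ dividing $x^n-1$. For integers $s\ge 0$ and $i\ge1$, $2^s\|i$ means $2^s\mid i$ and $2^{s+1}\nmid i$. *)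

theory Defs
  imports "HOL-Computational_Algebra.Computational_Algebra"
begin

text \<open>Conjugation on coefficients: bar a = a^q (the field has q^2 elements).\<close>
definition conj_poly :: "nat \<Rightarrow> 'a::field poly \<Rightarrow> 'a poly" where
  "conj_poly q f = map_poly (\<lambda>a. a ^ q) f"

definition recip_poly :: "'a::field poly \<Rightarrow> 'a poly" where
  "recip_poly f = smult (inverse (coeff f 0)) (reflect_poly f)"

definition dagger_poly :: "nat \<Rightarrow> 'a::field poly \<Rightarrow> 'a poly" where
  "dagger_poly q f = conj_poly q (recip_poly f)"

definition SCRIM :: "nat \<Rightarrow> 'a::field poly \<Rightarrow> bool" where
  "SCRIM q f \<longleftrightarrow> lead_coeff f = 1 \<and> irreducible f \<and> coeff f 0 \<noteq> 0 \<and> f = dagger_poly q f"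

definition Omega :: "nat \<Rightarrow> nat \<Rightarrow> 'a::field poly set" where
  "Omega q n = {f. SCRIM q f \<and> f dvd (monom 1 n - 1)}"

end

theory Submission
  imports Defs "HOL-Algebra.Algebraic_Closure_Type" "HOL-Number_Theory.Residues"
begin

text \<open>
  Over the algebraic closure of \<open>F = GF(q^2)\<close>, a monic irreducible divisor \<open>f\<close> of
  \<open>x^n - 1\<close> (\<open>n\<close> prime to \<open>q\<close>) is the product of the \<open>x - w\<close> over one orbit of
  \<open>w \<mapsto> w^(q^2)\<close> on the \<open>n\<close>-th roots of unity, and every such orbit descends to an
  irreducible polynomial over \<open>F\<close>. The roots of \<open>f\<^sup>\<dagger>\<close> are the \<open>w^(-q)\<close>, so \<open>f\<close> is
  SCRIM exactly when its orbit is closed under \<open>w \<mapsto> w^(-q)\<close>, i.e. when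
  \<open>z^(q^(2i) + q) = 1\<close> for a root \<open>z\<close> and some \<open>i\<close>.

  Split \<open>z = u v\<close> with \<open>u^(2^m) = 1\<close> and \<open>v^n' = 1\<close>, both powers of \<open>z\<close>. Since
  \<open>q^(2i) + q \<equiv> q + 1 (mod 2(q + 1))\<close> and \<open>2^r\<close> exactly divides \<open>q + 1\<close>, the condition
  forces \<open>u^(2^s) = 1\<close> with \<open>s = min m r\<close>; conversely such \<open>u\<close> satisfy \<open>u^(q+1) = 1\<close>,
  are fixed by \<open>w \<mapsto> w^(q^2)\<close> and do not affect the condition. So the orbits counted for
  \<open>n\<close> are exactly the translates \<open>u O\<close> of those for \<open>n'\<close> by the \<open>2^s\<close> roots of unity
  of order dividing \<open>2^s\<close>.
\<close>

hide_const (open) Divisibility.prime Divisibility.irreducible Polynomials.degree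
  Polynomials.lead_coeff module.smult up_ring.coeff up_ring.monom

section \<open>Ring homomorphisms and vanishing polynomials\<close>

locale comm_ring_hom =
  fixes hom :: "'a::comm_ring_1 \<Rightarrow> 'b::comm_ring_1"
  assumes hom_add: "hom (x + y) = hom x + hom y"
    and hom_mult: "hom (x * y) = hom x * hom y"
    and hom_one [simp]: "hom 1 = 1"
begin

lemma hom_zero [simp]: "hom 0 = 0"
  using hom_add[of 0 0] by simp

lemma hom_uminus: "hom (- x) = - hom x"
  using hom_add[of "- x" x] by (simp add: eq_neg_iff_add_eq_0)

lemma map_poly_add: "map_poly hom (f + g) = map_poly hom f + map_poly hom g"
  by (rule poly_eqI) (simp add: coeff_map_poly hom_add)

lemma map_poly_mult: "map_poly hom (f * g) = map_poly hom f * map_poly hom g"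
  by (induction f) (simp_all add: map_poly_pCons map_poly_add map_poly_smult hom_mult)

lemma map_poly_prod: "map_poly hom (\<Prod>i\<in>A. f i) = (\<Prod>i\<in>A. map_poly hom (f i))"
  by (induction A rule: infinite_finite_induct) (simp_all add: map_poly_mult)

lemma map_poly_hom_smult: "map_poly hom (smult c f) = smult (hom c) (map_poly hom f)"
  by (simp add: map_poly_smult hom_mult)

lemma poly_map_poly: "poly (map_poly hom f) (hom x) = hom (poly f x)"
  by (induction f) (simp_all add: map_poly_pCons hom_add hom_mult)

end

definition vanishing_poly :: "'a::comm_ring_1 set \<Rightarrow> 'a poly" where
  "vanishing_poly S = (\<Prod>w\<in>S. [:- w, 1:])"

lemma (in comm_ring_hom) map_poly_vanishing_poly:
  assumes "inj_on hom S"
  shows "map_poly hom (vanishing_poly S) = vanishing_poly (hom ` S)"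
  using assms by (simp add: vanishing_poly_def map_poly_prod map_poly_pCons hom_uminus prod.reindex)

lemma poly_vanishing_poly: "poly (vanishing_poly S) x = (\<Prod>w\<in>S. x - w)"
  by (simp add: vanishing_poly_def poly_prod)

lemma vanishing_poly_root_iff:
  fixes S :: "'a::idom set"
  assumes "finite S"
  shows "poly (vanishing_poly S) x = 0 \<longleftrightarrow> x \<in> S"
  using assms by (simp add: poly_vanishing_poly prod_zero_iff)

lemma vanishing_poly_roots:
  fixes S :: "'a::idom set"
  assumes "finite S"
  shows "{x. poly (vanishing_poly S) x = 0} = S"
  using vanishing_poly_root_iff[OF assms] by auto

lemma lead_coeff_vanishing_poly [simp]: "lead_coeff (vanishing_poly S :: 'a::idom poly) = 1"
  by (simp add: vanishing_poly_def lead_coeff_prod)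

lemma vanishing_poly_nonzero [simp]: "vanishing_poly S \<noteq> (0 :: 'a::idom poly)"
  using lead_coeff_vanishing_poly[of S] by (auto simp del: lead_coeff_vanishing_poly)

lemma degree_vanishing_poly:
  "finite S \<Longrightarrow> degree (vanishing_poly S :: 'a::idom poly) = card S"
  by (simp add: vanishing_poly_def degree_prod_eq_sum_degree)

lemma vanishing_poly_inj:
  fixes S T :: "'a::idom set"
  assumes "finite S" "finite T" "vanishing_poly S = vanishing_poly T"
  shows "S = T"
  by (metis vanishing_poly_roots assms)

lemma vanishing_poly_dvdI:
  fixes p :: "'a::idom poly"
  assumes "finite S" "\<And>w. w \<in> S \<Longrightarrow> poly p w = 0"
  shows "vanishing_poly S dvd p"
  using assms
proof (induction S rule: finite_induct)
  case empty
  then show ?case by (simp add: vanishing_poly_def)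
next
  case (insert w S)
  then obtain g where g: "p = vanishing_poly S * g"
    by (auto elim: dvdE)
  have "poly g w = 0"
    using insert.prems[of w] insert.hyps g by (simp add: vanishing_poly_root_iff)
  then obtain h where "g = [:- w, 1:] * h"
    by (auto simp: poly_eq_0_iff_dvd elim: dvdE)
  with g have "p = ([:- w, 1:] * vanishing_poly S) * h"
    by (simp only: mult_ac)
  also have "[:- w, 1:] * vanishing_poly S = vanishing_poly (insert w S)"
    using insert.hyps by (simp add: vanishing_poly_def)
  finally show ?case by simp
qed

lemma recip_poly_vanishing_poly:
  fixes S :: "'a::field set"
  assumes "finite S" "0 \<notin> S"
  shows "recip_poly (vanishing_poly S) = vanishing_poly (inverse ` S)"
proof -
  have "reflect_poly (vanishing_poly S) = (\<Prod>w\<in>S. smult (- w) [:- inverse w, 1:])"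
    unfolding vanishing_poly_def reflect_poly_prod
  proof (rule prod.cong)
    fix w assume "w \<in> S"
    with assms(2) have "w \<noteq> 0" by auto
    have "reflect_poly [:- w, 1:] = [:1, - w:]"
      by (rule poly_eqI) (auto simp: coeff_reflect_poly coeff_pCons split: nat.splits)
    with \<open>w \<noteq> 0\<close> show "reflect_poly [:- w, 1:] = smult (- w) [:- inverse w, 1:]"
      by simp
  qed simp
  also have "\<dots> = smult (\<Prod>w\<in>S. - w) (vanishing_poly (inverse ` S))"
    by (simp only: prod_smult) (simp add: vanishing_poly_def prod.reindex inj_on_def)
  finally show ?thesis
    using assms by (simp add: recip_poly_def poly_0_coeff_0[symmetric] poly_vanishing_poly)
qed

lemma poly_pderiv_eq_0_if_square_dvd:
  fixes p :: "'a::idom poly"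
  assumes "[:- w, 1:] ^ 2 dvd p"
  shows "poly (pderiv p) w = 0"
proof -
  obtain g where "p = [:- w, 1:] * [:- w, 1:] * g"
    using assms by (auto simp: power2_eq_square elim: dvdE)
  then show ?thesis
    by (simp only: pderiv_mult poly_add poly_mult) simp
qed

lemma monic_irreducible_dvd_eq:
  fixes f h :: "'a::field poly"
  assumes "irreducible f" "h dvd f" "\<not> is_unit h" "lead_coeff f = 1" "lead_coeff h = 1"
  shows "f = h"
proof -
  obtain g where g: "f = h * g"
    using assms(2) by (elim dvdE)
  with assms(1,3) have "is_unit g"
    using Factorial_Ring.irreducibleD by blast
  then obtain c where "g = [:c:]"
    by (auto simp: is_unit_poly_iff)
  moreover have "lead_coeff g = 1"
    using g assms(4,5) by (simp add: lead_coeff_mult)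
  ultimately have "g = 1"
    by (simp add: one_pCons)
  with g show ?thesis by simp
qed

section \<open>Roots of unity\<close>

definition roots_of_unity :: "nat \<Rightarrow> 'a::field set" where
  "roots_of_unity N = {z. z ^ N = 1}"

lemma roots_of_unity_eq_roots: "roots_of_unity N = {z. poly (monom 1 N - 1) z = 0}"
  by (simp add: roots_of_unity_def poly_monom)

lemma degree_x_pow_minus_1: "0 < N \<Longrightarrow> degree (monom 1 N - 1 :: 'a::field poly) = N"
  by (intro antisym degree_diff_le le_degree) (simp_all add: degree_monom_eq)

lemma x_pow_minus_1_nonzero: "0 < N \<Longrightarrow> monom 1 N - 1 \<noteq> (0 :: 'a::field poly)"
  by (metis degree_0 degree_x_pow_minus_1 less_irrefl)

lemma finite_roots_of_unity: "0 < N \<Longrightarrow> finite (roots_of_unity N :: 'a::field set)"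
  unfolding roots_of_unity_eq_roots by (intro poly_roots_finite x_pow_minus_1_nonzero)

lemma card_roots_of_unity:
  assumes "of_nat N \<noteq> (0 :: 'a::alg_closed_field)"
  shows "card (roots_of_unity N :: 'a set) = N"
proof -
  let ?p = "monom 1 N - 1 :: 'a poly" and ?S = "roots_of_unity N :: 'a set"
  have "0 < N" using assms by (intro gr0I) simp
  have fin: "finite ?S" by (rule finite_roots_of_unity[OF \<open>0 < N\<close>])
  obtain g where g: "?p = vanishing_poly ?S * g"
    using vanishing_poly_dvdI[OF fin, of ?p] by (auto simp: roots_of_unity_def poly_monom elim: dvdE)
  have "degree g = 0"
  proof (rule ccontr)
    assume "degree g \<noteq> 0"
    then obtain w where w: "poly g w = 0"
      using alg_closed_imp_poly_has_root by blast
    then have "w \<in> ?S"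
      using g by (simp add: roots_of_unity_eq_roots)
    then have "[:- w, 1:] * [:- w, 1:] dvd vanishing_poly ?S * g"
      using w fin by (intro mult_dvd_mono) (simp_all add: vanishing_poly_root_iff flip: poly_eq_0_iff_dvd)
    then have "poly (pderiv ?p) w = 0"
      by (intro poly_pderiv_eq_0_if_square_dvd) (simp add: g power2_eq_square)
    moreover have "w \<noteq> 0"
      using \<open>w \<in> ?S\<close> \<open>0 < N\<close> by (auto simp: roots_of_unity_def zero_power)
    ultimately show False
      using assms by (simp add: pderiv_diff pderiv_monom poly_monom)
  qed
  from g x_pow_minus_1_nonzero[OF \<open>0 < N\<close>] have "g \<noteq> 0"
    by auto
  then have "degree ?p = card ?S + degree g"
    by (simp add: g degree_mult_eq degree_vanishing_poly[OF fin])
  then show ?thesis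
    using \<open>degree g = 0\<close> \<open>0 < N\<close> by (simp add: degree_x_pow_minus_1)
qed

lemma power_eq_if_cong:
  fixes z :: "'a::monoid_mult"
  assumes "z ^ N = 1" "[a = b] (mod N)"
  shows "z ^ a = z ^ b"
proof -
  have "z ^ c = z ^ (c mod N)" for c
  proof -
    have "z ^ c = (z ^ N) ^ (c div N) * z ^ (c mod N)"
      by (simp flip: power_mult power_add)
    with assms(1) show ?thesis by simp
  qed
  with assms(2) show ?thesis
    by (metis cong_def)
qed

lemma power_eq_1_if_dvd:
  fixes z :: "'a::monoid_mult"
  shows "z ^ a = 1 \<Longrightarrow> a dvd b \<Longrightarrow> z ^ b = 1"
  by (auto elim!: dvdE simp: power_mult)

lemma power_gcd_eq_1:
  fixes z :: "'a::monoid_mult"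
  assumes "z ^ a = 1" "z ^ b = 1"
  shows "z ^ gcd a b = 1"
proof (cases "a = 0")
  case False
  then obtain x y where "a * x = b * y + gcd a b"
    using bezout_nat by blast
  then have "z ^ (a * x) = z ^ (b * y) * z ^ gcd a b"
    by (simp add: power_add)
  with assms show ?thesis
    by (simp add: power_mult)
qed (use assms in simp)

lemma split_root_of_unity:
  fixes z :: "'a::comm_monoid_mult"
  assumes "z ^ (A * B) = 1" "coprime A B"
  obtains a b where "(z ^ a) ^ A = 1" "(z ^ b) ^ B = 1" "z = z ^ a * z ^ b"
proof -
  obtain x where x: "[B * x = 1] (mod A)"
    using cong_solve_coprime_nat[of B A] assms(2) by (auto simp: coprime_commute)
  obtain y where y: "[A * y = 1] (mod B)"
    using cong_solve_coprime_nat[of A B] assms(2) by auto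
  have "[B * x + A * y = 1] (mod A)"
    using cong_add[OF x cong_mult_self_left[of A y]] by simp
  moreover have "[B * x + A * y = 1] (mod B)"
    using cong_add[OF cong_mult_self_left[of B x] y] by simp
  ultimately have "[B * x + A * y = 1] (mod A * B)"
    using assms(2) by (rule coprime_cong_mult_nat)
  then have "z = z ^ (B * x) * z ^ (A * y)"
    using power_eq_if_cong[OF assms(1)] by (simp flip: power_add)
  moreover have "(z ^ (B * x)) ^ A = (z ^ (A * B)) ^ x" "(z ^ (A * y)) ^ B = (z ^ (A * B)) ^ y"
    by (simp_all flip: power_mult add: ac_simps)
  ultimately show ?thesis
    using that assms(1) by simp
qed

section \<open>A finite field inside its algebraic closure\<close>

lemma finite_field_power_card:
  fixes x :: "'a::{finite,field}"
  shows "x ^ card (UNIV :: 'a set) = x"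
proof (cases "x = 0")
  case False
  define R where "R = (ring_of_type_algebra :: 'a ring)"
  interpret R: field R
    unfolding R_def ..
  have pow: "y [^]\<^bsub>R\<^esub> j = y ^ j" for y :: 'a and j :: nat
    by (induction j) (simp_all add: R_def ring_of_type_algebra_def)
  have "Units R = UNIV - {0}" and "\<one>\<^bsub>R\<^esub> = 1"
    by (simp_all add: R.field_Units) (simp_all add: R_def ring_of_type_algebra_def)
  with False have "x ^ (card (UNIV :: 'a set) - 1) = 1"
    using R.units_power_order_eq_one[of x] by (simp add: pow)
  moreover have "card (UNIV :: 'a set) = Suc (card (UNIV :: 'a set) - 1)"
    using finite_UNIV_card_ge_0[where 'a='a] by simp
  ultimately show ?thesis
    by (metis power_Suc mult_1_right)
qed (use finite_UNIV_card_ge_0[where 'a='a] in simp)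

interpretation to_ac: comm_ring_hom to_ac
  by unfold_locales simp_all

lemma range_to_ac:
  "range (to_ac :: 'a::{finite,field} \<Rightarrow> 'a alg_closure) = {y. y ^ card (UNIV :: 'a set) = y}"
proof -
  let ?Q = "card (UNIV :: 'a set)"
  let ?R = "{y :: 'a alg_closure. y ^ ?Q = y}"
  have "card {0, 1 :: 'a} \<le> ?Q"
    by (rule card_mono) simp_all
  then have "2 \<le> ?Q" by simp
  define P :: "'a alg_closure poly" where "P = monom 1 ?Q - [:0, 1:]"
  have "coeff P ?Q = 1"
    using \<open>2 \<le> ?Q\<close> by (simp add: P_def coeff_pCons split: nat.split)
  then have "P \<noteq> 0" by auto
  have "degree P \<le> ?Q"
    using \<open>2 \<le> ?Q\<close> unfolding P_def by (intro degree_diff_le) (simp_all add: degree_monom_eq)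
  have roots: "?R = {y. poly P y = 0}"
    by (simp add: P_def poly_monom)
  have sub: "range to_ac \<subseteq> ?R"
    by (auto simp flip: to_ac_power simp: finite_field_power_card)
  have "card ?R \<le> ?Q"
    using card_poly_roots_bound[OF \<open>P \<noteq> 0\<close>] \<open>degree P \<le> ?Q\<close> by (simp add: roots)
  also have "?Q = card (range (to_ac :: 'a \<Rightarrow> 'a alg_closure))"
    by (simp add: card_image inj_to_ac)
  finally show ?thesis
    using sub poly_roots_finite[OF \<open>P \<noteq> 0\<close>] by (intro card_seteq) (simp_all add: roots)
qed

lemma map_poly_to_ac_eq_iff [simp]: "map_poly to_ac f = map_poly to_ac g \<longleftrightarrow> f = g"
  by (simp add: poly_eq_iff coeff_map_poly)

lemma map_poly_to_ac_eq_0_iff [simp]: "map_poly to_ac f = 0 \<longleftrightarrow> f = 0"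
  using map_poly_to_ac_eq_iff[of f 0] by simp

lemma degree_map_poly_to_ac [simp]: "degree (map_poly to_ac f) = degree f"
  by (simp add: degree_map_poly)

lemma lead_coeff_map_poly_to_ac [simp]: "lead_coeff (map_poly to_ac f) = to_ac (lead_coeff f)"
  by (simp add: coeff_map_poly)

lemma map_poly_to_ac_x_pow_minus_1 [simp]: "map_poly to_ac (monom 1 N - 1) = monom 1 N - 1"
  by (rule poly_eqI) (simp add: coeff_map_poly coeff_monom coeff_1 if_distrib)

lemma map_poly_to_ac_dvd_iff [simp]:
  "map_poly to_ac f dvd map_poly to_ac g \<longleftrightarrow> f dvd (g :: 'a::field poly)"
proof
  assume dvd: "map_poly to_ac f dvd map_poly to_ac g"
  have "map_poly to_ac g = map_poly to_ac f * map_poly to_ac (g div f) + map_poly to_ac (g mod f)"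
    by (simp flip: to_ac.map_poly_mult to_ac.map_poly_add)
  with dvd have dvd_mod: "map_poly to_ac f dvd map_poly to_ac (g mod f)"
    by (metis dvd_add_right_iff dvd_triv_left)
  show "f dvd g"
  proof (rule ccontr)
    assume "\<not> f dvd g"
    then have "g mod f \<noteq> 0" by (simp add: mod_eq_0_iff_dvd)
    then have "degree f \<le> degree (g mod f)"
      using dvd_imp_degree_le[OF dvd_mod] by simp
    moreover have "f \<noteq> 0"
      using dvd_mod \<open>g mod f \<noteq> 0\<close> by auto
    ultimately show False
      using degree_mod_less'[OF _ \<open>g mod f \<noteq> 0\<close>] by fastforce
  qed
qed (auto simp: to_ac.map_poly_mult)

lemma map_poly_to_ac_dagger_poly:
  assumes "0 < q"
  shows "map_poly to_ac (dagger_poly q f) = dagger_poly q (map_poly to_ac f)"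
proof -
  have "reflect_poly (map_poly to_ac f) = map_poly to_ac (reflect_poly f)"
    by (rule poly_eqI) (simp add: coeff_reflect_poly coeff_map_poly)
  then have "dagger_poly q (map_poly to_ac f) = map_poly (\<lambda>a. a ^ q) (map_poly to_ac (recip_poly f))"
    by (simp add: dagger_poly_def conj_poly_def recip_poly_def to_ac.map_poly_hom_smult coeff_map_poly)
  also have "\<dots> = map_poly to_ac (dagger_poly q f)"
    using assms by (simp add: dagger_poly_def conj_poly_def map_poly_map_poly o_def)
  finally show ?thesis ..
qed

lemma frobenius_comm_ring_hom:
  assumes "CHAR('a::comm_ring_1) = p" "prime p"
  shows "comm_ring_hom (\<lambda>x::'a. x ^ p ^ j)"
proof unfold_locales
  fix x y :: 'a
  show "(x + y) ^ p ^ j = x ^ p ^ j + y ^ p ^ j"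
    using freshmans_dream'[of "p ^ j" j x y] assms by simp
qed (simp_all add: power_mult_distrib)

lemma frobenius_inj:
  fixes x y :: "'a::idom"
  assumes "CHAR('a) = p" "prime p" "x ^ p ^ j = y ^ p ^ j"
  shows "x = y"
proof -
  interpret comm_ring_hom "\<lambda>x::'a. x ^ p ^ j"
    by (rule frobenius_comm_ring_hom[OF assms(1,2)])
  have "(x - y) ^ p ^ j = 0"
    using hom_add[of "x - y" y] assms(3) by simp
  then show ?thesis by simp
qed

lemma dagger_poly_vanishing_poly:
  fixes S :: "'a::field set"
  assumes "CHAR('a) = p" "prime p" "q = p ^ k" "finite S" "0 \<notin> S"
  shows "dagger_poly q (vanishing_poly S) = vanishing_poly ((\<lambda>z. inverse z ^ q) ` S)"
proof -
  interpret frob: comm_ring_hom "\<lambda>x::'a. x ^ q"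
    using frobenius_comm_ring_hom[OF assms(1,2), of k] assms(3) by simp
  have "inj_on (\<lambda>x::'a. x ^ q) (inverse ` S)"
    by (rule inj_onI) (use frobenius_inj assms(1-3) in blast)
  then show ?thesis
    by (simp add: dagger_poly_def conj_poly_def recip_poly_vanishing_poly[OF assms(4,5)]
        frob.map_poly_vanishing_poly image_image)
qed

section \<open>Orbits of \<open>z \<mapsto> z ^ Q\<close>\<close>

definition power_orbit :: "nat \<Rightarrow> 'a::monoid_mult \<Rightarrow> 'a set" where
  "power_orbit Q z = range (\<lambda>i. z ^ Q ^ i)"

lemma power_power_Suc: "(z :: 'a::monoid_mult) ^ Q ^ Suc i = (z ^ Q ^ i) ^ Q"
  by (simp only: power_Suc2 power_mult)

lemma self_in_power_orbit: "z \<in> power_orbit Q z"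
  unfolding power_orbit_def by (rule range_eqI[of _ _ 0]) simp

lemma power_in_power_orbit:
  assumes "w \<in> power_orbit Q z"
  shows "w ^ Q \<in> power_orbit Q z"
proof -
  obtain i where "w = z ^ Q ^ i"
    using assms by (auto simp: power_orbit_def)
  then have "w ^ Q = z ^ Q ^ Suc i"
    by (simp only: power_power_Suc)
  then show ?thesis
    unfolding power_orbit_def by (rule range_eqI)
qed

lemma power_orbit_subset:
  assumes "z \<in> S" "\<And>y. y \<in> S \<Longrightarrow> y ^ Q \<in> S"
  shows "power_orbit Q z \<subseteq> S"
proof -
  have "z ^ Q ^ i \<in> S" for i
    by (induction i) (use assms in \<open>simp_all only: power_power_Suc power_0 power_one_right\<close>)
  then show ?thesis
    unfolding power_orbit_def by blast
qed

lemma power_orbit_subset_power_orbit: "w \<in> power_orbit Q z \<Longrightarrow> power_orbit Q w \<subseteq> power_orbit Q z"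
  by (rule power_orbit_subset[OF _ power_in_power_orbit])

lemma power_orbit_subset_roots_of_unity:
  assumes "z ^ N = 1"
  shows "power_orbit Q z \<subseteq> roots_of_unity N"
proof (rule power_orbit_subset)
  fix y :: 'a
  assume "y \<in> roots_of_unity N"
  then show "y ^ Q \<in> roots_of_unity N"
    by (simp add: roots_of_unity_def) (metis mult.commute power_mult power_one)
qed (use assms in \<open>simp add: roots_of_unity_def\<close>)

lemma finite_power_orbit: "z ^ N = 1 \<Longrightarrow> 0 < N \<Longrightarrow> finite (power_orbit Q (z :: 'a::field))"
  using finite_subset[OF power_orbit_subset_roots_of_unity finite_roots_of_unity] .

lemma zero_notin_power_orbit: "z ^ N = 1 \<Longrightarrow> 0 < N \<Longrightarrow> 0 \<notin> power_orbit Q (z :: 'a::field)"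
  using power_orbit_subset_roots_of_unity[of z N Q] by (auto simp: roots_of_unity_def zero_power)

text \<open>By Euler's theorem \<open>z \<mapsto> z ^ Q ^ totient N\<close> is the identity on \<open>N\<close>-th roots of unity,
  so one can walk back along an orbit.\<close>
lemma mem_power_orbit_sym:
  fixes z :: "'a::monoid_mult"
  assumes "z ^ N = 1" "0 < N" "coprime Q N" "w \<in> power_orbit Q z"
  shows "z \<in> power_orbit Q w"
proof -
  obtain i where w: "w = z ^ Q ^ i"
    using assms(4) by (auto simp: power_orbit_def)
  define t where "t = totient N"
  have "[Q ^ (t * i) = 1] (mod N)"
    using cong_pow[OF euler_theorem[OF assms(3)], of i] by (simp add: t_def power_mult)
  then have "z ^ Q ^ (t * i) = z"
    using power_eq_if_cong[OF assms(1)] by simp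
  moreover have "i \<le> t * i"
    using assms(2) by (cases t) (simp_all add: t_def)
  ultimately have "w ^ Q ^ (t * i - i) = z"
    by (simp add: w flip: power_mult power_add)
  then show ?thesis
    unfolding power_orbit_def by (metis rangeI)
qed

lemma power_orbit_eq:
  fixes z :: "'a::monoid_mult"
  assumes "z ^ N = 1" "0 < N" "coprime Q N" "w \<in> power_orbit Q z"
  shows "power_orbit Q w = power_orbit Q z"
  using power_orbit_subset_power_orbit[OF assms(4)]
    power_orbit_subset_power_orbit[OF mem_power_orbit_sym[OF assms]] by (rule antisym)

lemma power_orbit_mult:
  fixes u v :: "'a::comm_monoid_mult"
  assumes "u ^ Q = u"
  shows "power_orbit Q (u * v) = (\<lambda>w. u * w) ` power_orbit Q v"
proof -
  have "u ^ Q ^ i = u" for i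
    by (induction i) (simp_all only: power_power_Suc power_0 power_one_right assms)
  then show ?thesis
    unfolding power_orbit_def by (auto simp: power_mult_distrib)
qed

lemma power_orbit_inverse_power:
  fixes z :: "'a::field"
  shows "power_orbit Q (inverse z ^ q) = (\<lambda>z. inverse z ^ q) ` power_orbit Q z"
  unfolding power_orbit_def
  by (auto simp: image_image power_inverse mult.commute simp flip: power_mult)

definition self_conj_reciprocal :: "nat \<Rightarrow> 'a::field \<Rightarrow> bool" where
  "self_conj_reciprocal q z \<longleftrightarrow> inverse z ^ q \<in> power_orbit (q ^ 2) z"

definition scr_orbits :: "nat \<Rightarrow> nat \<Rightarrow> 'a::field set set" where
  "scr_orbits q N = {power_orbit (q ^ 2) z | z. z ^ N = 1 \<and> self_conj_reciprocal q z}"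

lemma self_conj_reciprocal_iff:
  fixes z :: "'a::field"
  assumes "z \<noteq> 0"
  shows "self_conj_reciprocal q z \<longleftrightarrow> (\<exists>i. z ^ ((q ^ 2) ^ i + q) = 1)"
proof -
  have "inverse z ^ q = z ^ (q ^ 2) ^ i \<longleftrightarrow> z ^ ((q ^ 2) ^ i + q) = 1" for i
    using assms by (auto simp: power_add power_inverse field_simps)
  then show ?thesis
    by (auto simp: self_conj_reciprocal_def power_orbit_def)
qed

lemma inverse_power_image_power_orbit:
  fixes z :: "'a::field"
  assumes "z ^ N = 1" "0 < N" "coprime (q ^ 2) N" "self_conj_reciprocal q z"
  shows "(\<lambda>z. inverse z ^ q) ` power_orbit (q ^ 2) z = power_orbit (q ^ 2) z"
  using power_orbit_eq[OF assms(1-3)] assms(4)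
  by (simp add: self_conj_reciprocal_def flip: power_orbit_inverse_power)

lemma scr_orbits_1: "scr_orbits q 1 = {{1 :: 'a::field}}"
proof -
  have "power_orbit Q (1 :: 'a) = {1}" for Q
    by (simp add: power_orbit_def)
  then show ?thesis
    by (auto simp: scr_orbits_def self_conj_reciprocal_def)
qed

section \<open>Splitting off the \<open>2\<close>-part of the order\<close>

lemma cong_square_power_plus:
  fixes q :: nat
  assumes "odd q"
  shows "[(q ^ 2) ^ i + q = q + 1] (mod 2 * (q + 1))"
proof -
  obtain a where "q = 2 * a + 1"
    using assms by (rule oddE)
  then have "q ^ 2 = 2 * (q + 1) * a + 1"
    by (simp add: power2_eq_square algebra_simps)
  moreover have "[2 * (q + 1) * a = 0] (mod 2 * (q + 1))"
    by (simp only: cong_0_iff dvd_triv_left)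
  then have "[2 * (q + 1) * a + 1 = 0 + 1] (mod 2 * (q + 1))"
    by (rule cong_add) simp
  ultimately have "[(q ^ 2) ^ i = 1] (mod 2 * (q + 1))"
    using cong_pow[of "q ^ 2" 1 _ i] by simp
  then have "[(q ^ 2) ^ i + q = 1 + q] (mod 2 * (q + 1))"
    by (rule cong_add) simp
  then show ?thesis
    by (simp only: add.commute[of 1 q])
qed

context
  fixes q r :: nat
  assumes q_odd: "odd q" and two_pow_dvd: "2 ^ r dvd q + 1"
    and two_pow_not_dvd: "\<not> 2 ^ (r + 1) dvd q + 1"
begin

lemma two_power_dvd_exponent_imp_le:
  assumes "2 ^ j dvd (q ^ 2) ^ i + q"
  shows "j \<le> r"
proof (rule ccontr)
  assume "\<not> j \<le> r"
  then have "(2::nat) ^ (r + 1) dvd 2 ^ j"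
    by (intro le_imp_power_dvd) simp
  from this assms have "2 ^ (r + 1) dvd (q ^ 2) ^ i + q"
    by (rule dvd_trans)
  moreover have "[(q ^ 2) ^ i + q = q + 1] (mod 2 ^ (r + 1))"
    using cong_square_power_plus[OF q_odd] by (rule cong_dvd_modulus_nat)
      (use mult_dvd_mono[OF dvd_refl[of "2::nat"] two_pow_dvd] in simp)
  ultimately have "2 ^ (r + 1) dvd q + 1"
    by (metis cong_dvd_iff)
  with two_pow_not_dvd show False ..
qed

lemma power_exponent_eq_1_if_two_power_root:
  fixes u :: "'b::comm_monoid_mult"
  assumes "u ^ 2 ^ min m r = 1"
  shows "u ^ ((q ^ 2) ^ i + q) = 1"
proof -
  have "(2::nat) ^ min m r dvd 2 ^ r"
    by (simp add: le_imp_power_dvd)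
  also have "\<dots> dvd q + 1"
    by (rule two_pow_dvd)
  also have "q + 1 dvd (q ^ 2) ^ i + q"
    using cong_dvd_iff[OF cong_dvd_modulus_nat[OF cong_square_power_plus[OF q_odd] dvd_triv_right]] by simp
  finally show ?thesis
    by (rule power_eq_1_if_dvd[OF assms])
qed

lemma two_power_root_fixed:
  fixes u :: "'b::field"
  assumes "u ^ 2 ^ min m r = 1"
  shows "u ^ q ^ 2 = u"
proof -
  have "u ^ q ^ 2 * u ^ q = u * u ^ q"
    using power_exponent_eq_1_if_two_power_root[OF assms, of 1]
      power_exponent_eq_1_if_two_power_root[OF assms, of 0]
    by (simp add: power_add)
  moreover have "u \<noteq> 0"
    using assms by (auto simp: zero_power)
  ultimately show ?thesis by simp
qed

lemma self_conj_reciprocal_mult_iff: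
  fixes u v :: "'b::field"
  assumes "u ^ 2 ^ min m r = 1" "v \<noteq> 0"
  shows "self_conj_reciprocal q (u * v) \<longleftrightarrow> self_conj_reciprocal q v"
proof -
  have "u \<noteq> 0"
    using assms(1) by (auto simp: zero_power)
  with assms show ?thesis
    by (simp add: self_conj_reciprocal_iff power_mult_distrib power_exponent_eq_1_if_two_power_root)
qed

lemma scr_root_decompose:
  fixes z :: "'b::field"
  assumes "odd n'" "z ^ (2 ^ m * n') = 1" "self_conj_reciprocal q z"
  obtains u v where "u ^ 2 ^ min m r = 1" "v ^ n' = 1" "self_conj_reciprocal q v" "z = u * v"
proof -
  obtain a b where u: "(z ^ a) ^ 2 ^ m = 1" and v: "(z ^ b) ^ n' = 1" and z: "z = z ^ a * z ^ b"
    using split_root_of_unity[OF assms(2)] assms(1) by auto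
  have "z \<noteq> 0"
    using assms(1,2) by (auto simp: zero_power odd_pos)
  with assms(3) obtain i where "z ^ ((q ^ 2) ^ i + q) = 1"
    by (auto simp: self_conj_reciprocal_iff)
  moreover have "(z ^ c) ^ ((q ^ 2) ^ i + q) = (z ^ ((q ^ 2) ^ i + q)) ^ c" for c
    by (simp flip: power_mult add: mult.commute)
  ultimately have ua: "(z ^ a) ^ ((q ^ 2) ^ i + q) = 1" and vb: "(z ^ b) ^ ((q ^ 2) ^ i + q) = 1"
    by simp_all
  obtain j where j: "j \<le> m" "gcd ((q ^ 2) ^ i + q) (2 ^ m) = 2 ^ j"
    using divides_primepow_nat[OF two_is_prime_nat, of "gcd ((q ^ 2) ^ i + q) (2 ^ m)" m] by auto
  then have "j \<le> r"
    by (metis gcd_dvd1 two_power_dvd_exponent_imp_le)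
  have "(z ^ a) ^ 2 ^ j = 1"
    using power_gcd_eq_1[OF ua u] j(2) by simp
  then have "(z ^ a) ^ 2 ^ min m r = 1"
    by (rule power_eq_1_if_dvd) (simp add: le_imp_power_dvd j(1) \<open>j \<le> r\<close>)
  moreover have "self_conj_reciprocal q (z ^ b)"
    using vb \<open>z \<noteq> 0\<close> by (auto simp: self_conj_reciprocal_iff)
  ultimately show ?thesis
    using that v z by blast
qed

lemma scr_orbits_mult_eq_image:
  assumes "odd n'"
  shows "scr_orbits q (2 ^ m * n')
    = (\<lambda>(u, A). (\<lambda>w. u * w) ` A) ` (roots_of_unity (2 ^ min m r) \<times> (scr_orbits q n' :: 'b::field set set))"
proof (intro antisym subsetI)
  fix T :: "'b set"
  assume "T \<in> scr_orbits q (2 ^ m * n')"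
  then obtain z where z: "z ^ (2 ^ m * n') = 1" "self_conj_reciprocal q z" "T = power_orbit (q ^ 2) z"
    by (auto simp: scr_orbits_def)
  then obtain u v where uv: "u ^ 2 ^ min m r = 1" "v ^ n' = 1" "self_conj_reciprocal q v" "z = u * v"
    using scr_root_decompose[OF assms] by metis
  then have "T = (\<lambda>w. u * w) ` power_orbit (q ^ 2) v"
    using z(3) power_orbit_mult[OF two_power_root_fixed] by simp
  moreover have "(u, power_orbit (q ^ 2) v) \<in> roots_of_unity (2 ^ min m r) \<times> scr_orbits q n'"
    using uv by (auto simp: scr_orbits_def roots_of_unity_def)
  ultimately show "T \<in> (\<lambda>(u, A). (\<lambda>w. u * w) ` A) ` (roots_of_unity (2 ^ min m r) \<times> scr_orbits q n')"
    by (auto intro: image_eqI)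
next
  fix T :: "'b set"
  assume "T \<in> (\<lambda>(u, A). (\<lambda>w. u * w) ` A) ` (roots_of_unity (2 ^ min m r) \<times> scr_orbits q n')"
  then obtain u v where u: "u ^ 2 ^ min m r = 1" and v: "v ^ n' = 1" "self_conj_reciprocal q v"
    and T: "T = (\<lambda>w. u * w) ` power_orbit (q ^ 2) v"
    by (auto simp: scr_orbits_def roots_of_unity_def)
  have "v \<noteq> 0"
    using v(1) assms by (auto simp: zero_power odd_pos)
  have "T = power_orbit (q ^ 2) (u * v)"
    using T power_orbit_mult[OF two_power_root_fixed[OF u]] by simp
  moreover have "(u * v) ^ (2 ^ m * n') = 1"
    using power_eq_1_if_dvd[OF u, of "2 ^ m * n'"] power_eq_1_if_dvd[OF v(1), of "2 ^ m * n'"]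
    by (simp add: power_mult_distrib le_imp_power_dvd dvd_mult2)
  moreover have "self_conj_reciprocal q (u * v)"
    using self_conj_reciprocal_mult_iff[OF u \<open>v \<noteq> 0\<close>] v(2) by simp
  ultimately show "T \<in> scr_orbits q (2 ^ m * n')"
    by (auto simp: scr_orbits_def)
qed

lemma inj_on_translate_scr_orbits:
  assumes "odd n'"
  shows "inj_on (\<lambda>(u, A). (\<lambda>w. u * w) ` A)
    (roots_of_unity (2 ^ min m r) \<times> (scr_orbits q n' :: 'b::field set set))"
proof (rule inj_onI, clarify)
  fix u u' :: 'b and A A' :: "'b set"
  assume u: "u \<in> roots_of_unity (2 ^ min m r)" and u': "u' \<in> roots_of_unity (2 ^ min m r)"
    and A: "A \<in> scr_orbits q n'" and A': "A' \<in> scr_orbits q n'"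
    and eq: "(\<lambda>w. u * w) ` A = (\<lambda>w. u' * w) ` A'"
  obtain v where v: "v ^ n' = 1" "A = power_orbit (q ^ 2) v"
    using A by (auto simp: scr_orbits_def)
  obtain v' where v': "v' ^ n' = 1" "A' = power_orbit (q ^ 2) v'"
    using A' by (auto simp: scr_orbits_def)
  have "u * v \<in> (\<lambda>w. u' * w) ` A'"
    using eq v(2) self_in_power_orbit by blast
  then obtain w where w: "w \<in> A'" "u * v = u' * w"
    by auto
  have "w \<in> roots_of_unity n'"
    using w(1) v' power_orbit_subset_roots_of_unity[OF v'(1)] by blast
  then have "w ^ n' = 1"
    by (simp add: roots_of_unity_def)
  have nz: "u \<noteq> 0" "u' \<noteq> 0" "v \<noteq> 0"
    using u u' v(1) assms by (auto simp: roots_of_unity_def zero_power odd_pos)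
  define c where "c = u / u'"
  have "c = w / v"
    using w(2) nz by (simp add: c_def field_simps)
  have "c ^ 2 ^ min m r = 1"
    using u u' by (simp add: c_def power_divide roots_of_unity_def)
  moreover have "c ^ n' = 1"
    using \<open>w ^ n' = 1\<close> v(1) \<open>c = w / v\<close> by (simp add: power_divide)
  ultimately have "c ^ gcd (2 ^ min m r) n' = 1"
    by (rule power_gcd_eq_1)
  moreover have "coprime (2 ^ min m r) n'"
    using assms by simp
  ultimately have "u = u'"
    using nz by (simp add: c_def coprime_iff_gcd_eq_1)
  moreover have "inj (\<lambda>w. u * w)"
    using nz by (auto intro: injI)
  ultimately show "u = u' \<and> A = A'"
    using eq by (simp add: inj_image_eq_iff)
qed

lemma card_scr_orbits_mult:
  assumes "odd n'"
  shows "card (scr_orbits q (2 ^ m * n') :: 'b::field set set)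
    = card (roots_of_unity (2 ^ min m r) :: 'b set) * card (scr_orbits q n' :: 'b set set)"
  by (simp add: scr_orbits_mult_eq_image[OF assms] card_image[OF inj_on_translate_scr_orbits[OF assms]]
      card_cartesian_product)

end

section \<open>SCRIM divisors of \<open>x\<^sup>n - 1\<close> and orbits\<close>

definition ac_roots :: "'a::field poly \<Rightarrow> 'a alg_closure set" where
  "ac_roots f = {z. poly (map_poly to_ac f) z = 0}"

lemma finite_ac_roots: "f \<noteq> 0 \<Longrightarrow> finite (ac_roots f)"
  unfolding ac_roots_def by (rule poly_roots_finite) simp

lemma card_ac_roots_le: "f \<noteq> 0 \<Longrightarrow> card (ac_roots f) \<le> degree f"
  using card_poly_roots_bound[of "map_poly to_ac f"] by (simp add: ac_roots_def)

lemma ac_roots_nonempty: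
  assumes "degree f \<noteq> 0"
  obtains z where "z \<in> ac_roots f"
  using alg_closed_imp_poly_has_root[of "map_poly to_ac f"] assms by (auto simp: ac_roots_def)

lemma ac_roots_subset_roots_of_unity:
  assumes "f dvd monom 1 n - 1"
  shows "ac_roots f \<subseteq> roots_of_unity n"
proof
  fix z
  assume "z \<in> ac_roots f"
  moreover from assms have "map_poly to_ac f dvd monom 1 n - 1"
    by (metis map_poly_to_ac_dvd_iff map_poly_to_ac_x_pow_minus_1)
  ultimately have "[:- z, 1:] dvd monom 1 n - 1"
    by (auto simp: ac_roots_def poly_eq_0_iff_dvd intro: dvd_trans)
  then show "z \<in> roots_of_unity n"
    by (simp only: roots_of_unity_eq_roots mem_Collect_eq poly_eq_0_iff_dvd)
qed

text \<open>\<open>of_ac\<close> returns junk off the image of \<open>to_ac\<close>; for finite \<open>S\<close> stable under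
  \<open>z \<mapsto> z ^ q\<^sup>2\<close> the coefficients of \<open>vanishing_poly S\<close> lie in that image
  (\<open>map_poly_to_ac_descent_poly\<close>).\<close>
definition descent_poly :: "'a::field alg_closure set \<Rightarrow> 'a poly" where
  "descent_poly S = map_poly of_ac (vanishing_poly S)"

context
  fixes q p k :: nat
  assumes card_UNIV: "card (UNIV :: 'a::{finite,field} set) = q ^ 2"
    and prime_p: "prime p" and q_eq: "q = p ^ k" and k_pos: "0 < k"
begin

lemma CHAR_eq_prime: "CHAR('a) = p"
proof -
  have "prime CHAR('a)"
    using prime_CHAR_semidom[where 'a='a] finite_imp_CHAR_pos[where 'a='a] by simp
  moreover have "CHAR('a) dvd p ^ (2 * k)"
    using CHAR_dvd_CARD[where 'a='a] card_UNIV q_eq by (simp add: power_mult mult.commute)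
  ultimately show ?thesis
    using prime_p by (metis prime_dvd_power primes_dvd_imp_eq)
qed

lemma q_pos: "0 < q"
  using prime_p q_eq by (simp add: prime_gt_0_nat)

lemma power_q2_eq_self [simp]: "(x :: 'a) ^ q ^ 2 = x"
  using finite_field_power_card[of x] card_UNIV by simp

lemma frobenius_q_power_hom: "comm_ring_hom (\<lambda>x :: 'a alg_closure. x ^ q ^ j)"
  using frobenius_comm_ring_hom[where 'a="'a alg_closure", of p "k * j"] CHAR_eq_prime prime_p q_eq
  by (simp add: power_mult)

lemma frobenius_q_power_inj: "x ^ q ^ j = y ^ q ^ j \<Longrightarrow> x = (y :: 'a alg_closure)"
  using frobenius_inj[where 'a="'a alg_closure", of p x "k * j" y] CHAR_eq_prime prime_p q_eq
  by (simp add: power_mult)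

lemma ac_roots_power_closed:
  assumes "z \<in> ac_roots (f :: 'a poly)"
  shows "z ^ q ^ 2 \<in> ac_roots f"
proof -
  interpret frob: comm_ring_hom "\<lambda>x :: 'a alg_closure. x ^ q ^ 2"
    by (rule frobenius_q_power_hom)
  have "map_poly (\<lambda>y. y ^ q ^ 2) (map_poly to_ac f) = map_poly to_ac f"
    using q_pos by (simp add: map_poly_map_poly o_def flip: to_ac_power)
  with frob.poly_map_poly[of "map_poly to_ac f" z] assms q_pos show ?thesis
    by (simp add: ac_roots_def)
qed

lemma map_poly_to_ac_descent_poly:
  assumes "finite (S :: 'a alg_closure set)" "\<And>y. y \<in> S \<Longrightarrow> y ^ q ^ 2 \<in> S"
  shows "map_poly to_ac (descent_poly S) = vanishing_poly S"
proof -
  interpret frob: comm_ring_hom "\<lambda>x :: 'a alg_closure. x ^ q ^ 2"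
    by (rule frobenius_q_power_hom)
  have inj: "inj_on (\<lambda>y :: 'a alg_closure. y ^ q ^ 2) S"
    by (auto intro: inj_onI frobenius_q_power_inj)
  have "(\<lambda>y. y ^ q ^ 2) ` S = S"
    using assms by (intro endo_inj_surj inj) auto
  then have fixed: "map_poly (\<lambda>y. y ^ q ^ 2) (vanishing_poly S) = vanishing_poly S"
    using frob.map_poly_vanishing_poly[OF inj] by simp
  have "coeff (vanishing_poly S) i \<in> range to_ac" for i
  proof -
    have "coeff (vanishing_poly S) i ^ q ^ 2 = coeff (vanishing_poly S) i"
      using arg_cong[OF fixed, of "\<lambda>f. coeff f i"] q_pos by (simp add: coeff_map_poly)
    then show ?thesis
      by (simp add: range_to_ac card_UNIV)
  qed
  then show ?thesis
    unfolding descent_poly_def by (intro poly_eqI) (simp add: coeff_map_poly to_ac_of_ac)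
qed

lemma of_nat_alg_closure_nonzero:
  assumes "coprime N q"
  shows "of_nat N \<noteq> (0 :: 'a alg_closure)"
proof
  assume "of_nat N = (0 :: 'a alg_closure)"
  then have "p dvd N"
    using CHAR_eq_prime by (simp add: of_nat_eq_0_iff_char_dvd)
  moreover have "p dvd q"
    using q_eq k_pos by simp
  ultimately show False
    using assms prime_p coprime_common_divisor not_prime_unit by blast
qed

context
  fixes n :: nat
  assumes n_pos: "0 < n" and coprime_n_q: "coprime n q"
begin

lemma coprime_q2_n: "coprime (q ^ 2) n"
  using coprime_n_q by (simp add: coprime_commute)

lemma map_poly_to_ac_orbit_poly:
  assumes "(z :: 'a alg_closure) ^ n = 1"
  shows "map_poly to_ac (descent_poly (power_orbit (q ^ 2) z)) = vanishing_poly (power_orbit (q ^ 2) z)"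
  using finite_power_orbit[OF assms n_pos] power_in_power_orbit by (rule map_poly_to_ac_descent_poly)

lemma ac_roots_orbit_poly:
  assumes "(z :: 'a alg_closure) ^ n = 1"
  shows "ac_roots (descent_poly (power_orbit (q ^ 2) z)) = power_orbit (q ^ 2) z"
  using vanishing_poly_roots[OF finite_power_orbit[OF assms n_pos]]
  by (simp add: ac_roots_def map_poly_to_ac_orbit_poly[OF assms])

lemma lead_coeff_orbit_poly:
  assumes "(z :: 'a alg_closure) ^ n = 1"
  shows "lead_coeff (descent_poly (power_orbit (q ^ 2) z)) = 1"
  using arg_cong[OF map_poly_to_ac_orbit_poly[OF assms], of lead_coeff]
  by (metis lead_coeff_map_poly_to_ac lead_coeff_vanishing_poly to_ac_1 to_ac_eq_iff)

lemma orbit_subset_ac_roots_of_factor: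
  assumes "(z :: 'a alg_closure) ^ n = 1" "a dvd descent_poly (power_orbit (q ^ 2) z)" "\<not> is_unit a"
  shows "power_orbit (q ^ 2) z \<subseteq> ac_roots a"
proof -
  let ?O = "power_orbit (q ^ 2) z"
  have h: "map_poly to_ac a dvd vanishing_poly ?O"
    using assms(2) map_poly_to_ac_orbit_poly[OF assms(1)] by (metis map_poly_to_ac_dvd_iff)
  then have "a \<noteq> 0" by auto
  with assms(3) have "degree a \<noteq> 0"
    by (simp add: is_unit_iff_degree)
  then obtain w where w: "w \<in> ac_roots a"
    by (rule ac_roots_nonempty)
  with h have "poly (vanishing_poly ?O) w = 0"
    by (auto simp: ac_roots_def poly_eq_0_iff_dvd intro: dvd_trans)
  then have "w \<in> ?O"
    using vanishing_poly_root_iff[OF finite_power_orbit[OF assms(1) n_pos]] by blast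
  then have "?O = power_orbit (q ^ 2) w"
    using power_orbit_eq[OF assms(1) n_pos coprime_q2_n] by simp
  also have "\<dots> \<subseteq> ac_roots a"
    using w ac_roots_power_closed by (rule power_orbit_subset)
  finally show ?thesis .
qed

lemma degree_orbit_poly:
  assumes "(z :: 'a alg_closure) ^ n = 1"
  shows "degree (descent_poly (power_orbit (q ^ 2) z)) = card (power_orbit (q ^ 2) z)"
  using map_poly_to_ac_orbit_poly[OF assms] degree_vanishing_poly[OF finite_power_orbit[OF assms n_pos]]
  by (metis degree_map_poly_to_ac)

lemma card_orbit_le_degree_of_factor:
  assumes "(z :: 'a alg_closure) ^ n = 1" "a dvd descent_poly (power_orbit (q ^ 2) z)" "\<not> is_unit a"
  shows "card (power_orbit (q ^ 2) z) \<le> degree a"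
proof -
  have "a \<noteq> 0"
    using assms(2) map_poly_to_ac_orbit_poly[OF assms(1)] by auto
  then have "card (power_orbit (q ^ 2) z) \<le> card (ac_roots a)"
    by (intro card_mono finite_ac_roots orbit_subset_ac_roots_of_factor[OF assms])
  also have "\<dots> \<le> degree a"
    using \<open>a \<noteq> 0\<close> by (rule card_ac_roots_le)
  finally show ?thesis .
qed

lemma irreducible_orbit_poly:
  assumes "(z :: 'a alg_closure) ^ n = 1"
  shows "irreducible (descent_poly (power_orbit (q ^ 2) z))"
proof -
  let ?O = "power_orbit (q ^ 2) z"
  let ?h = "descent_poly ?O"
  have "0 < card ?O"
    using finite_power_orbit[OF assms n_pos] self_in_power_orbit by (auto simp: card_gt_0_iff)
  then have "?h \<noteq> 0"
    using degree_orbit_poly[OF assms] by auto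
  show ?thesis
  proof (rule Factorial_Ring.irreducibleI)
    show "?h \<noteq> 0" by fact
    show "\<not> is_unit ?h"
      using degree_orbit_poly[OF assms] \<open>0 < card ?O\<close> \<open>?h \<noteq> 0\<close> by (simp add: is_unit_iff_degree)
  next
    fix a b
    assume ab: "?h = a * b"
    show "is_unit a \<or> is_unit b"
    proof (rule ccontr)
      assume "\<not> (is_unit a \<or> is_unit b)"
      then have "card ?O \<le> degree a" "card ?O \<le> degree b"
        using card_orbit_le_degree_of_factor[OF assms] ab by auto
      moreover have "degree ?h = degree a + degree b"
        using ab \<open>?h \<noteq> 0\<close> by (simp add: degree_mult_eq)
      ultimately show False
        using degree_orbit_poly[OF assms] \<open>0 < card ?O\<close> by simp
    qed
  qed
qed

lemma orbit_poly_dagger_fixed_iff: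
  assumes "(z :: 'a alg_closure) ^ n = 1"
  shows "descent_poly (power_orbit (q ^ 2) z) = dagger_poly q (descent_poly (power_orbit (q ^ 2) z))
    \<longleftrightarrow> self_conj_reciprocal q z"
proof -
  let ?O = "power_orbit (q ^ 2) z"
  let ?h = "descent_poly ?O"
  let ?\<sigma> = "\<lambda>z :: 'a alg_closure. inverse z ^ q"
  have fin: "finite ?O" and h: "map_poly to_ac ?h = vanishing_poly ?O"
    using finite_power_orbit[OF assms n_pos] map_poly_to_ac_orbit_poly[OF assms] .
  have "map_poly to_ac (dagger_poly q ?h) = dagger_poly q (vanishing_poly ?O)"
    by (simp add: map_poly_to_ac_dagger_poly q_pos h)
  also have "\<dots> = vanishing_poly (?\<sigma> ` ?O)"
    using CHAR_eq_prime prime_p q_eq fin zero_notin_power_orbit[OF assms n_pos]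
    by (intro dagger_poly_vanishing_poly) simp_all
  finally have "?h = dagger_poly q ?h \<longleftrightarrow> vanishing_poly ?O = vanishing_poly (?\<sigma> ` ?O)"
    by (metis h map_poly_to_ac_eq_iff)
  also have "\<dots> \<longleftrightarrow> ?\<sigma> ` ?O = ?O"
    using vanishing_poly_inj[OF fin finite_imageI[OF fin]] by auto
  also have "\<dots> \<longleftrightarrow> self_conj_reciprocal q z"
    using inverse_power_image_power_orbit[OF assms n_pos coprime_q2_n] self_in_power_orbit[of z]
    by (auto simp: self_conj_reciprocal_def)
  finally show ?thesis .
qed

lemma orbit_poly_in_Omega:
  assumes "(z :: 'a alg_closure) ^ n = 1" "self_conj_reciprocal q z"
  shows "descent_poly (power_orbit (q ^ 2) z) \<in> Omega q n"
proof -
  let ?O = "power_orbit (q ^ 2) z"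
  let ?h = "descent_poly ?O"
  have fin: "finite ?O" and h: "map_poly to_ac ?h = vanishing_poly ?O"
    using finite_power_orbit[OF assms(1) n_pos] map_poly_to_ac_orbit_poly[OF assms(1)] .
  have "to_ac (coeff ?h 0) = poly (vanishing_poly ?O) 0"
    by (simp flip: h add: poly_0_coeff_0 coeff_map_poly)
  then have "coeff ?h 0 \<noteq> 0"
    using vanishing_poly_root_iff[OF fin, of 0] zero_notin_power_orbit[OF assms(1) n_pos] by auto
  moreover have "?h dvd monom 1 n - 1"
  proof -
    have "vanishing_poly ?O dvd monom 1 n - 1"
      using fin power_orbit_subset_roots_of_unity[OF assms(1)]
      by (intro vanishing_poly_dvdI) (auto simp: roots_of_unity_eq_roots)
    then show ?thesis
      by (metis h map_poly_to_ac_dvd_iff map_poly_to_ac_x_pow_minus_1)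
  qed
  ultimately show ?thesis
    using lead_coeff_orbit_poly[OF assms(1)] irreducible_orbit_poly[OF assms(1)]
      orbit_poly_dagger_fixed_iff[OF assms(1)] assms(2)
    by (simp add: Omega_def SCRIM_def)
qed

lemma Omega_imp_orbit_poly:
  assumes "f \<in> (Omega q n :: 'a poly set)"
  obtains z :: "'a alg_closure"
  where "z ^ n = 1" "self_conj_reciprocal q z" "f = descent_poly (power_orbit (q ^ 2) z)"
proof -
  have monic: "lead_coeff f = 1" and irr: "irreducible f" and dagger: "f = dagger_poly q f"
    and dvd: "f dvd monom 1 n - 1"
    using assms by (auto simp: Omega_def SCRIM_def)
  have "f \<noteq> 0"
    using monic by auto
  then have "degree f \<noteq> 0"
    using irreducible_not_unit[OF irr] by (simp add: is_unit_iff_degree)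
  then obtain z where z: "z \<in> ac_roots f"
    by (rule ac_roots_nonempty)
  with dvd have zn: "z ^ n = 1"
    using ac_roots_subset_roots_of_unity by (auto simp: roots_of_unity_def)
  let ?O = "power_orbit (q ^ 2) z"
  have "?O \<subseteq> ac_roots f"
    using z ac_roots_power_closed by (rule power_orbit_subset)
  then have "vanishing_poly ?O dvd map_poly to_ac f"
    using finite_power_orbit[OF zn n_pos] by (intro vanishing_poly_dvdI) (auto simp: ac_roots_def)
  then have "descent_poly ?O dvd f"
    by (simp flip: map_poly_to_ac_orbit_poly[OF zn])
  then have f: "f = descent_poly ?O"
    using irr monic irreducible_orbit_poly[OF zn] lead_coeff_orbit_poly[OF zn]
    by (intro monic_irreducible_dvd_eq) (simp_all add: irreducible_not_unit)
  with dagger have "self_conj_reciprocal q z"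
    using orbit_poly_dagger_fixed_iff[OF zn] by metis
  with zn f show ?thesis
    using that by blast
qed

lemma Omega_eq_descent_poly_image: "(Omega q n :: 'a poly set) = descent_poly ` scr_orbits q n"
proof
  show "(Omega q n :: 'a poly set) \<subseteq> descent_poly ` scr_orbits q n"
  proof
    fix f :: "'a poly"
    assume "f \<in> Omega q n"
    then obtain z where "z ^ n = 1" "self_conj_reciprocal q z" "f = descent_poly (power_orbit (q ^ 2) z)"
      using Omega_imp_orbit_poly by blast
    then show "f \<in> descent_poly ` scr_orbits q n"
      by (auto simp: scr_orbits_def)
  qed
  show "descent_poly ` scr_orbits q n \<subseteq> (Omega q n :: 'a poly set)"
    by (auto simp: scr_orbits_def intro: orbit_poly_in_Omega)
qed

lemma card_Omega_eq_card_scr_orbits: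
  "card (Omega q n :: 'a poly set) = card (scr_orbits q n :: 'a alg_closure set set)"
proof -
  have "inj_on descent_poly (scr_orbits q n :: 'a alg_closure set set)"
  proof (rule inj_onI)
    fix A B :: "'a alg_closure set"
    assume "A \<in> scr_orbits q n" "B \<in> scr_orbits q n" "descent_poly A = descent_poly B"
    from \<open>A \<in> scr_orbits q n\<close> obtain z where "z ^ n = 1" "A = power_orbit (q ^ 2) z"
      by (auto simp: scr_orbits_def)
    moreover from \<open>B \<in> scr_orbits q n\<close> obtain w where "w ^ n = 1" "B = power_orbit (q ^ 2) w"
      by (auto simp: scr_orbits_def)
    ultimately show "A = B"
      using \<open>descent_poly A = descent_poly B\<close> by (metis ac_roots_orbit_poly)
  qed
  then show ?thesis
    by (simp add: Omega_eq_descent_poly_image card_image)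
qed

end

lemma card_Omega_two_power_mult:
  assumes "2 ^ r dvd q + 1" "\<not> 2 ^ (r + 1) dvd q + 1" "odd q" "odd N" "coprime N q"
  shows "card (Omega q (2 ^ j * N) :: 'a poly set) = 2 ^ min j r * card (Omega q N :: 'a poly set)"
proof -
  have "0 < N" "coprime (2 ^ j * N) q"
    using assms(3-5) by (auto intro: odd_pos)
  then have "card (Omega q (2 ^ j * N) :: 'a poly set)
      = card (scr_orbits q (2 ^ j * N) :: 'a alg_closure set set)"
    by (intro card_Omega_eq_card_scr_orbits) simp_all
  also have "\<dots> = card (roots_of_unity (2 ^ min j r) :: 'a alg_closure set)
      * card (scr_orbits q N :: 'a alg_closure set set)"
    by (rule card_scr_orbits_mult[OF assms(3,1,2,4)])
  also have "card (roots_of_unity (2 ^ min j r) :: 'a alg_closure set) = 2 ^ min j r"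
    using of_nat_alg_closure_nonzero[of "2 ^ min j r"] assms(3) by (intro card_roots_of_unity) simp
  finally show ?thesis
    using card_Omega_eq_card_scr_orbits[OF \<open>0 < N\<close> assms(5)] by simp
qed

lemma card_Omega_1: "card (Omega q 1 :: 'a poly set) = 1"
proof -
  have "card (scr_orbits q 1 :: 'a alg_closure set set) = 1"
    unfolding scr_orbits_1 by simp
  then show ?thesis
    using card_Omega_eq_card_scr_orbits[of 1] by simp
qed

end

theorem theorem2p8:
  fixes q n m n' r :: nat
  assumes field_card: "card (UNIV :: 'a set) = q ^ 2"
    and q_pp: "\<exists>p k. prime p \<and> 0 < k \<and> q = p ^ k"
    and n_pos: "0 < n"
    and cop: "coprime n q"
    and n_decomp: "n = 2 ^ m * n'"
    and n'_odd: "odd n'"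
    and r_pos: "0 < r"
    and r_exact: "2 ^ r dvd (q + 1) \<and> \<not> 2 ^ (r + 1) dvd (q + 1)"
  shows "card (Omega q n :: 'a::{finite,field} poly set) =
           (if m \<le> r then 2 ^ m * card (Omega q n' :: 'a poly set)
            else 2 ^ r * card (Omega q n' :: 'a poly set))
         \<and> card (Omega q 1 :: 'a poly set) = 1
         \<and> (\<forall>k. card (Omega q (2 ^ k) :: 'a poly set) = (if k \<le> r then 2 ^ k else 2 ^ r))"
proof -
  obtain p e where p: "prime p" "0 < e" "q = p ^ e"
    using q_pp by blast
  have r: "2 ^ r dvd q + 1" "\<not> 2 ^ (r + 1) dvd q + 1"
    using r_exact by auto
  have "(2::nat) dvd 2 ^ r"
    using r_pos by simp
  then have "2 dvd q + 1"
    using r(1) by (rule dvd_trans)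
  then have "odd q"
    by simp
  note card_mult = card_Omega_two_power_mult[OF field_card p(1,3,2) r \<open>odd q\<close>]
  note card_1 = card_Omega_1[OF field_card p(1,3,2)]
  have "card (Omega q (2 ^ j) :: 'a poly set) = 2 ^ min j r" for j
    using card_mult[of 1 j] card_1 by simp
  moreover have "coprime n' q"
    using cop n_decomp by simp
  ultimately show ?thesis
    using card_mult[OF n'_odd, of m] card_1 n_decomp by (simp add: min_def)
qed

end
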